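(* Let $\mathbf{p}=\langle x_1,y_1,r_1,\dots,x_n,y_n,r_n\rangle$ be a packing of a planar embedded graph $G=(V,E)$, with vertex set partitioned as $V=V^+\sqcup V^-\sqcup V^=\sqcup V^0$. Suppose there exists an equilibrium stress $\omega:E\to\mathbb{R}$ (i.e. $\sum_{j:(i,j)\in E}\omega_{ij}(\mathbf{p}_i-\mathbf{p}_j)=0$ for every vertex $i$) whose radial force sum $\omega_i=\sum_{j:(i,j)\in E}\omega_{ij}(r_i+r_j)$ is positive for $i\in V^-$, negative for $i\in V^+$, and $0$ for $i\in V^0$. Let $\mathbf{p}'=\langle x_1',y_1',r_1',\dots,x_n',y_n',r_n'\rangle$ be any vector (not required to preserve tangencies) such that for every edge $(i,j)\in E$: (1) if $\omega_{ij}<0$, then $(\mathbf{p}_i-\mathbf{p}_j)\cdot(\mathbf{p}_i'-\mathbf{p}_j')-(r_i+r_j)(r_i'+r_j')\ge 0$ (disks $i$ and $j$ remain tangent or become separated to first order); (2) if $\omega_{ij}>0$, then $(\mathbf{p}_i-\mathbf{p}_j)\cdot(\mathbf{p}_i'-\mathbf{p}_j')-(r_i+r_j)(r_i'+r_j')\le 0$ (disks $i$ and $j$ remain tangent or become overlapped to first order); and (3) $r_k'\ge 0$ for $k\in V^+$, $r_k'\le 0$ for $k\in V^-$, $r_k'=0$ for $k\in V^=$. Then $r_k'=0$ for all $k\in V^+\cup V^-$, and $(\mathbf{p}_i-\mathbf{p}_j)\cdot(\mathbf{p}_i'-\mathbf{p}_j')=(r_i+r_j)(r_i'+r_j')$ for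 every edge $(i,j)$ with $\omega_{ij}\neq 0$ (all such tangencies are preserved to first order).
   Context: A packing of $G$ assigns to each vertex $i$ a disk with center $\mathbf{p}_i=(x_i,y_i)$ and radius $r_i>0$, such that disks joined by an edge are externally tangent, $(r_i+r_j)^2=\|\mathbf{p}_i-\mathbf{p}_j\|^2$. The sets $V^+,V^-,V^=,V^0$ are the disks allowed only to increase (or stay) in radius, only to decrease (or stay), with fixed radius, and free, respectively. *)

theory Defs
  imports "HOL-Analysis.Analysis"
begin

definition simple_graph :: "'v set \<Rightarrow> ('v \<times> 'v) set \<Rightarrow> bool" where
  "simple_graph V E \<longleftrightarrow> finite V \<and> E \<subseteq> V \<times> V \<and>
     (\<forall>i j. (i, j) \<in> E \<longrightarrow> (j, i) \<in> E) \<and> (\<forall>i. (i, i) \<notin> E)"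

definition is_packing :: "'v set \<Rightarrow> ('v \<times> 'v) set \<Rightarrow> ('v \<Rightarrow> real^2) \<Rightarrow> ('v \<Rightarrow> real) \<Rightarrow> bool" where
  "is_packing V E p r \<longleftrightarrow> (\<forall>i\<in>V. r i > 0) \<and>
     (\<forall>(i, j)\<in>E. (r i + r j)\<^sup>2 = (norm (p i - p j))\<^sup>2)"

definition equilibrium_stress :: "'v set \<Rightarrow> ('v \<times> 'v) set \<Rightarrow> ('v \<Rightarrow> real^2) \<Rightarrow> ('v \<Rightarrow> 'v \<Rightarrow> real) \<Rightarrow> bool" where
  "equilibrium_stress V E p \<omega> \<longleftrightarrow> (\<forall>i j. \<omega> i j = \<omega> j i) \<and>
     (\<forall>i\<in>V. (\<Sum>j\<in>{j. (i, j) \<in> E}. \<omega> i j *\<^sub>R (p i - p j)) = 0)"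

definition radial_sum :: "('v \<times> 'v) set \<Rightarrow> ('v \<Rightarrow> real) \<Rightarrow> ('v \<Rightarrow> 'v \<Rightarrow> real) \<Rightarrow> 'v \<Rightarrow> real" where
  "radial_sum E r \<omega> i = (\<Sum>j\<in>{j. (i, j) \<in> E}. \<omega> i j * (r i + r j))"

definition tangency_deriv :: "('v \<Rightarrow> real^2) \<Rightarrow> ('v \<Rightarrow> real) \<Rightarrow> ('v \<Rightarrow> real^2) \<Rightarrow> ('v \<Rightarrow> real) \<Rightarrow> 'v \<Rightarrow> 'v \<Rightarrow> real" where
  "tangency_deriv p r p' r' i j = (p i - p j) \<bullet> (p' i - p' j) - (r i + r j) * (r' i + r' j)"

end

theory Submission
  imports Defs
begin

text \<open>Virtual work: for a symmetric equilibrium stress, equilibrium at the vertices cancels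
  the contribution of the centre velocities, so that the sum over edges of \<open>\<omega> i j * T i j\<close>
  equals \<open>-2\<close> times the sum over vertices of \<open>r' i * \<omega> i\<close>, where \<open>T\<close> is the
  first-order change of the tangency constraint and \<open>\<omega> i\<close> the radial force sum. The sign
  hypotheses make every edge term on the left and every vertex term on the right nonpositive,
  so both sides vanish termwise.\<close>

lemma sum_edges_eq_sum_neighbours:
  fixes g :: "'v \<Rightarrow> 'v \<Rightarrow> 'a::comm_monoid_add"
  assumes "finite V" and "E \<subseteq> V \<times> V"
  shows "(\<Sum>(i, j)\<in>E. g i j) = (\<Sum>i\<in>V. \<Sum>j\<in>{j. (i, j) \<in> E}. g i j)"
proof -
  have "E = Sigma V (\<lambda>i. {j. (i, j) \<in> E})" using assms(2) by auto
  moreover have "finite {j. (i, j) \<in> E}" for i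
    using assms by (auto intro: finite_subset[of _ V])
  ultimately show ?thesis
    using assms(1) by (simp add: sum.Sigma)
qed

lemma sum_edges_swap:
  fixes g :: "'v \<Rightarrow> 'v \<Rightarrow> 'a::comm_monoid_add"
  assumes "\<And>i j. (i, j) \<in> E \<Longrightarrow> (j, i) \<in> E"
  shows "(\<Sum>(i, j)\<in>E. g j i) = (\<Sum>(i, j)\<in>E. g i j)"
  by (rule sum.reindex_bij_witness[of E prod.swap prod.swap]) (auto intro: assms)

lemma sum_edges_symmetrize:
  fixes g :: "'v \<Rightarrow> 'v \<Rightarrow> 'a::comm_semiring_1"
  assumes "\<And>i j. (i, j) \<in> E \<Longrightarrow> (j, i) \<in> E"
  shows "(\<Sum>(i, j)\<in>E. g i j + g j i) = 2 * (\<Sum>(i, j)\<in>E. g i j)"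
  using sum_edges_swap[OF assms, of g]
  by (simp add: sum.distrib case_prod_unfold mult_2)

lemma stress_weighted_tangency_deriv_sum:
  assumes "finite V" and "E \<subseteq> V \<times> V" and sym_E: "\<And>i j. (i, j) \<in> E \<Longrightarrow> (j, i) \<in> E"
    and stress: "equilibrium_stress V E p \<omega>"
  shows "(\<Sum>(i, j)\<in>E. \<omega> i j * tangency_deriv p r p' r' i j)
           = - 2 * (\<Sum>i\<in>V. r' i * radial_sum E r \<omega> i)"
proof -
  have sym_\<omega>: "\<omega> i j = \<omega> j i" for i j
    using stress unfolding equilibrium_stress_def by blast
  define f where "f i j = \<omega> i j * ((p i - p j) \<bullet> p' i)" for i j
  define g where "g i j = \<omega> i j * (r i + r j) * r' i" for i j
  have split: "\<omega> i j * tangency_deriv p r p' r' i j = (f i j + f j i) - (g i j + g j i)" for i j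
    unfolding f_def g_def tangency_deriv_def sym_\<omega>[of j i]
    by (simp add: inner_diff_left inner_diff_right algebra_simps)
  have "(\<Sum>(i, j)\<in>E. f i j) = (\<Sum>i\<in>V. (\<Sum>j\<in>{j. (i, j) \<in> E}. \<omega> i j *\<^sub>R (p i - p j)) \<bullet> p' i)"
    by (simp add: sum_edges_eq_sum_neighbours[OF assms(1,2)] f_def inner_sum_left)
  also have "\<dots> = 0"
    using stress unfolding equilibrium_stress_def by simp
  finally have centres: "(\<Sum>(i, j)\<in>E. f i j) = 0" .
  have radii: "(\<Sum>(i, j)\<in>E. g i j) = (\<Sum>i\<in>V. r' i * radial_sum E r \<omega> i)"
    by (simp add: sum_edges_eq_sum_neighbours[OF assms(1,2)] g_def radial_sum_def
        sum_distrib_left algebra_simps)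
  have "(\<Sum>(i, j)\<in>E. \<omega> i j * tangency_deriv p r p' r' i j)
          = (\<Sum>(i, j)\<in>E. f i j + f j i) - (\<Sum>(i, j)\<in>E. g i j + g j i)"
    by (simp add: split case_prod_unfold sum_subtractf)
  also have "\<dots> = - 2 * (\<Sum>i\<in>V. r' i * radial_sum E r \<omega> i)"
    by (simp add: sum_edges_symmetrize[OF sym_E] centres radii)
  finally show ?thesis .
qed

lemma nonpos_sums_balanced_imp_zero:
  fixes f :: "'a \<Rightarrow> real" and g :: "'b \<Rightarrow> real"
  assumes "finite A" "finite B" and "\<And>a. a \<in> A \<Longrightarrow> f a \<le> 0" "\<And>b. b \<in> B \<Longrightarrow> g b \<le> 0"
    and "sum f A = - c * sum g B" "c > 0"
  shows "(\<forall>a\<in>A. f a = 0) \<and> (\<forall>b\<in>B. g b = 0)"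
proof -
  have "sum f A \<le> 0" "sum g B \<le> 0"
    using assms(3,4) by (auto intro: sum_nonpos)
  moreover have "c * sum g B \<le> 0"
    using assms(6) \<open>sum g B \<le> 0\<close> by (simp add: mult_nonneg_nonpos)
  ultimately have "sum f A = 0" "sum g B = 0"
    using assms(5,6) by auto
  then show ?thesis
    using sum_nonneg_eq_0_iff[OF assms(1), of "\<lambda>a. - f a"]
      sum_nonneg_eq_0_iff[OF assms(2), of "\<lambda>b. - g b"] assms(3,4)
    by (simp add: sum_negf)
qed

theorem mainTheorem4:
  fixes V Vplus Vminus Veq Vzero :: "'v set" and E :: "('v \<times> 'v) set"
    and p p' :: "'v \<Rightarrow> real^2" and r r' :: "'v \<Rightarrow> real" and \<omega> :: "'v \<Rightarrow> 'v \<Rightarrow> real"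
  assumes graph: "simple_graph V E"
    and partition: "V = Vplus \<union> Vminus \<union> Veq \<union> Vzero"
      "Vplus \<inter> Vminus = {}" "Vplus \<inter> Veq = {}" "Vplus \<inter> Vzero = {}"
      "Vminus \<inter> Veq = {}" "Vminus \<inter> Vzero = {}" "Veq \<inter> Vzero = {}"
    and packing: "is_packing V E p r"
    and stress: "equilibrium_stress V E p \<omega>"
    and rad_minus: "\<forall>i\<in>Vminus. radial_sum E r \<omega> i > 0"
    and rad_plus: "\<forall>i\<in>Vplus. radial_sum E r \<omega> i < 0"
    and rad_zero: "\<forall>i\<in>Vzero. radial_sum E r \<omega> i = 0"
    and sep: "\<forall>(i, j)\<in>E. \<omega> i j < 0 \<longrightarrow> tangency_deriv p r p' r' i j \<ge> 0"
    and ovl: "\<forall>(i, j)\<in>E. \<omega> i j > 0 \<longrightarrow> tangency_deriv p r p' r' i j \<le> 0"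
    and r_plus: "\<forall>k\<in>Vplus. r' k \<ge> 0"
    and r_minus: "\<forall>k\<in>Vminus. r' k \<le> 0"
    and r_eq: "\<forall>k\<in>Veq. r' k = 0"
  shows "(\<forall>k\<in>Vplus \<union> Vminus. r' k = 0) \<and>
         (\<forall>(i, j)\<in>E. \<omega> i j \<noteq> 0 \<longrightarrow>
            (p i - p j) \<bullet> (p' i - p' j) = (r i + r j) * (r' i + r' j))"
proof -
  have fin_V: "finite V" and E_sub: "E \<subseteq> V \<times> V" and sym_E: "\<And>i j. (i, j) \<in> E \<Longrightarrow> (j, i) \<in> E"
    using graph unfolding simple_graph_def by auto
  let ?edge = "\<lambda>(i, j). \<omega> i j * tangency_deriv p r p' r' i j"
  let ?vertex = "\<lambda>i. r' i * radial_sum E r \<omega> i"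
  have edge_nonpos: "?edge e \<le> 0" if "e \<in> E" for e
    using that sep ovl by (cases e) (force simp: mult_le_0_iff)
  have vertex_nonpos: "?vertex i \<le> 0" if "i \<in> V" for i
    using that partition(1) rad_plus rad_minus rad_zero r_plus r_minus r_eq
    by (auto simp: mult_le_0_iff)
  have "(\<forall>e\<in>E. ?edge e = 0) \<and> (\<forall>i\<in>V. ?vertex i = 0)"
    using stress_weighted_tangency_deriv_sum[OF fin_V E_sub sym_E stress, of r p' r']
    by (intro nonpos_sums_balanced_imp_zero[where c = 2] finite_subset[OF E_sub] edge_nonpos
        vertex_nonpos) (auto simp: fin_V)
  moreover have "radial_sum E r \<omega> k \<noteq> 0" if "k \<in> Vplus \<union> Vminus" for k
    using that rad_plus rad_minus by force
  ultimately show ?thesis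
    using partition(1) unfolding tangency_deriv_def by fastforce
qed

end
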